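(* Let $\kappa,\nu,\mu,\theta$ be cardinals, and suppose that a partition $p:[\kappa]^2\to\mu$ and a coloring $c:[\kappa]^2\to\theta$ have a common coarsening $q:[\kappa]^2\to\nu$ that is not constant. Then $c$ does not witness $\kappa\nrightarrow_p[\kappa]^2_\theta$.
   Context: $[\kappa]^2$ denotes the set of pairs $(\alpha,\beta)$ with $\alpha<\beta<\kappa$. For functions $q:X\to\nu$ and $p:X\to\mu$, $q$ is a coarsening of $p$ iff $p(x)=p(y)$ implies $q(x)=q(y)$ for all $x,y\in X$. Given a partition $p:[\kappa]^2\to\mu$, a coloring $c:[\kappa]^2\to\theta$ witnesses $\kappa\nrightarrow_p[\kappa]^2_\theta$ iff for every $A\subseteq\kappa$ with $|A|=\kappa$ and every function $\tau:\mu\to\theta$ there is a pair $(\alpha,\beta)$ with $\alpha<\beta$ both in $A$ such that $c(\alpha,\beta)=\tau(p(\alpha,\beta))$. *)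

theory Defs
  imports Main "HOL-Library.FuncSet"
begin

text \<open>The cardinal kappa is represented by a cardinal order relation r (an initial
well-order); its elements are Field r, ordered by r.  [kappa]^2 is the set of
strictly increasing pairs.\<close>

definition pairs2 :: "'a rel \<Rightarrow> ('a \<times> 'a) set" where
  "pairs2 r = {(\<alpha>, \<beta>). (\<alpha>, \<beta>) \<in> r \<and> \<alpha> \<noteq> \<beta>}"

definition coarsening_on :: "'x set \<Rightarrow> ('x \<Rightarrow> 'n) \<Rightarrow> ('x \<Rightarrow> 'm) \<Rightarrow> bool" where
  "coarsening_on X q p \<longleftrightarrow> (\<forall>x\<in>X. \<forall>y\<in>X. p x = p y \<longrightarrow> q x = q y)"

definition witnesses_neg_partition ::
  "'a rel \<Rightarrow> ('a \<times> 'a \<Rightarrow> 'm) \<Rightarrow> 'm set \<Rightarrow> ('a \<times> 'a \<Rightarrow> 't) \<Rightarrow> 't set \<Rightarrow> bool" where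
  "witnesses_neg_partition r p M c T \<longleftrightarrow>
     (\<forall>A. A \<subseteq> Field r \<and> (card_of A, r) \<in> ordIso \<longrightarrow>
        (\<forall>\<tau> \<in> M \<rightarrow> T. \<exists>\<alpha> \<beta>. (\<alpha>, \<beta>) \<in> pairs2 r \<and> \<alpha> \<in> A \<and> \<beta> \<in> A \<and>
                         c (\<alpha>, \<beta>) = \<tau> (p (\<alpha>, \<beta>))))"

end

theory Submission
  imports Defs
begin

text \<open>A common coarsening q is constant on every class of p, and c can only agree with a colour
c y at pairs in the q-class of y. So if each class of p is sent to the colour of a pair outside
its q-class, which exists because q is not constant, c never agrees with the resulting colouring
of the classes of p, not even on the whole of [kappa]^2.\<close>

lemma coarsening_on_avoiding_colouring:
  assumes q_p: "coarsening_on X q p" and q_c: "coarsening_on X q c"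
    and c_T: "c \<in> X \<rightarrow> T" and q_nonconst: "\<exists>x\<in>X. \<exists>y\<in>X. q x \<noteq> q y"
  obtains \<tau> where "\<tau> \<in> M \<rightarrow> T" and "\<forall>z\<in>X. c z \<noteq> \<tau> (p z)"
proof -
  obtain x0 y0 where x0: "x0 \<in> X" and y0: "y0 \<in> X" "q x0 \<noteq> q y0"
    using q_nonconst by blast
  define other where "other x = (if q x = q x0 then y0 else x0)" for x
  have other: "other x \<in> X" "q (other x) \<noteq> q x" for x
    using x0 y0 by (auto simp: other_def)
  define \<tau> where "\<tau> m = c (other (inv_into X p m))" for m
  have "\<tau> \<in> M \<rightarrow> T"
    using c_T other(1) by (auto simp: \<tau>_def)
  moreover have "c z \<noteq> \<tau> (p z)" if z: "z \<in> X" for z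
  proof
    define x where "x = inv_into X p (p z)"
    have x: "x \<in> X" "p x = p z"
      using z by (auto simp: x_def inv_into_into f_inv_into_f)
    assume "c z = \<tau> (p z)"
    then have "c z = c (other x)"
      by (simp add: \<tau>_def x_def)
    then have "q z = q (other x)"
      using q_c z other(1) unfolding coarsening_on_def by blast
    moreover have "q z = q x"
      using q_p z x(1) x(2)[symmetric] unfolding coarsening_on_def by blast
    ultimately show False
      using other(2)[of x] by simp
  qed
  ultimately show thesis
    using that by blast
qed

lemma witnesses_neg_partition_agrees:
  assumes "Card_order r" and "witnesses_neg_partition r p M c T" and "\<tau> \<in> M \<rightarrow> T"
  shows "\<exists>z\<in>pairs2 r. c z = \<tau> (p z)"
  using assms card_of_Field_ordIso[OF assms(1)]
  unfolding witnesses_neg_partition_def by blast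

theorem proposition2p2:
  fixes r :: "'a rel" and M :: "'m set" and N :: "'n set" and T :: "'t set"
    and p :: "'a \<times> 'a \<Rightarrow> 'm" and c :: "'a \<times> 'a \<Rightarrow> 't" and q :: "'a \<times> 'a \<Rightarrow> 'n"
  assumes "Card_order r"
    and "Card_order \<mu>" and "Field \<mu> = M"
    and "Card_order \<nu>" and "Field \<nu> = N"
    and "Card_order \<theta>" and "Field \<theta> = T"
    and "p \<in> pairs2 r \<rightarrow> M" and "c \<in> pairs2 r \<rightarrow> T" and "q \<in> pairs2 r \<rightarrow> N"
    and "coarsening_on (pairs2 r) q p" and "coarsening_on (pairs2 r) q c"
    and "\<exists>x \<in> pairs2 r. \<exists>y \<in> pairs2 r. q x \<noteq> q y"
  shows "\<not> witnesses_neg_partition r p M c T"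
proof
  assume witness: "witnesses_neg_partition r p M c T"
  obtain \<tau> where "\<tau> \<in> M \<rightarrow> T" and "\<forall>z\<in>pairs2 r. c z \<noteq> \<tau> (p z)"
    using coarsening_on_avoiding_colouring[OF assms(11,12,9,13)] by blast
  then show False
    using witnesses_neg_partition_agrees[OF assms(1) witness] by blast
qed

end
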